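(* For any multigraph $G$, $|P(\mathcal{H}_G,-1)|=T_G(0,2)$, and this number equals the number of totally cyclic orientations of $G$.
   Context: A hypergraph $\mathcal{H}=(\mathcal{V},\mathcal{E})$ consists of a finite vertex set $\mathcal{V}$ and a set $\mathcal{E}$ of subsets of $\mathcal{V}$, each of size at least $1$, called edges. For a positive integer $\lambda$, a weak proper $\lambda$-colouring of $\mathcal{H}$ is a map $\phi:\mathcal{V}\to\{1,\dots,\lambda\}$ such that $|\{\phi(v):v\in e\}|>1$ for every $e\in\mathcal{E}$. $P(\mathcal{H},\lambda)$ denotes the number of weak proper $\lambda$-colourings of $\mathcal{H}$; it is a polynomial in $\lambda$, evaluated at $\lambda=-1$ as a polynomial. For a multigraph $G=(V,E)$ (loops and parallel edges allowed), $\mathcal{H}_G$ is the hypergraph with vertex set $V\cup\{w_e:e\in E\}$ (distinct new vertices $w_e$) and edge set $\{\{u_e,v_e,w_e\}: e\in E\}$, where $u_e,v_e$ are the ends of $e$. The Tutte polynomial is $T_G(x,y)=\sum_{A\subseteq E}(x-1)^{r(E)-r(A)}(y-1)^{|A|-r(A)}$ with $r(A)=|V|-c(A)$, $c(A)$ the number of components of $(V,A)$. A totally cyclic orientation of $G$ is an orientation in which every arc lies in some directed cycle. *)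

theory Defs
  imports Main "HOL-Library.FuncSet" "HOL-Computational_Algebra.Polynomial"
begin

type_synonym 'a hypergraph = "'a set \<times> 'a set set"

definition hg_verts :: "'a hypergraph \<Rightarrow> 'a set" where "hg_verts H = fst H"
definition hg_edges :: "'a hypergraph \<Rightarrow> 'a set set" where "hg_edges H = snd H"

definition weak_colourings :: "'a hypergraph \<Rightarrow> nat \<Rightarrow> ('a \<Rightarrow> nat) set" where
  "weak_colourings H k =
     {\<phi> \<in> hg_verts H \<rightarrow>\<^sub>E {1..k}. \<forall>e\<in>hg_edges H. card (\<phi> ` e) > 1}"

definition hg_chrom_poly :: "'a hypergraph \<Rightarrow> int poly" where
  "hg_chrom_poly H =
     (THE p. \<forall>k::nat. k \<ge> 1 \<longrightarrow> poly p (int k) = int (card (weak_colourings H k)))"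

text \<open>A multigraph is given by a vertex set V, an edge set E and a map ends assigning to each
  edge its pair of ends (the order of the pair is an arbitrary reference direction; a loop has
  equal ends).\<close>
definition multigraph :: "'v set \<Rightarrow> 'e set \<Rightarrow> ('e \<Rightarrow> 'v \<times> 'v) \<Rightarrow> bool" where
  "multigraph V E ends \<longleftrightarrow> finite V \<and> finite E \<and>
     (\<forall>e\<in>E. fst (ends e) \<in> V \<and> snd (ends e) \<in> V)"

definition hyp_of :: "'v set \<Rightarrow> 'e set \<Rightarrow> ('e \<Rightarrow> 'v \<times> 'v) \<Rightarrow> ('v + 'e) hypergraph" where
  "hyp_of V E ends =
     (Inl ` V \<union> Inr ` E,
      (\<lambda>e. {Inl (fst (ends e)), Inl (snd (ends e)), Inr e}) ` E)"

definition adj :: "('e \<Rightarrow> 'v \<times> 'v) \<Rightarrow> 'e set \<Rightarrow> ('v \<times> 'v) set" where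
  "adj ends A = {(u, v). \<exists>e\<in>A. ends e = (u, v) \<or> ends e = (v, u)}"

definition conn_rel :: "'v set \<Rightarrow> ('e \<Rightarrow> 'v \<times> 'v) \<Rightarrow> 'e set \<Rightarrow> ('v \<times> 'v) set" where
  "conn_rel V ends A = {(u, v). u \<in> V \<and> v \<in> V \<and> (u, v) \<in> (adj ends A)\<^sup>*}"

definition num_comps :: "'v set \<Rightarrow> ('e \<Rightarrow> 'v \<times> 'v) \<Rightarrow> 'e set \<Rightarrow> nat" where
  "num_comps V ends A = card (V // conn_rel V ends A)"

definition rank :: "'v set \<Rightarrow> ('e \<Rightarrow> 'v \<times> 'v) \<Rightarrow> 'e set \<Rightarrow> nat" where
  "rank V ends A = card V - num_comps V ends A"

definition tutte :: "'v set \<Rightarrow> 'e set \<Rightarrow> ('e \<Rightarrow> 'v \<times> 'v) \<Rightarrow> int \<Rightarrow> int \<Rightarrow> int" where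
  "tutte V E ends x y =
     (\<Sum>A\<in>Pow E. (x - 1) ^ (rank V ends E - rank V ends A) *
                 (y - 1) ^ (card A - rank V ends A))"

text \<open>An orientation assigns to each edge a boolean: True = directed from fst (ends e) to
  snd (ends e), False = the reverse direction.\<close>
definition tail :: "('e \<Rightarrow> 'v \<times> 'v) \<Rightarrow> ('e \<Rightarrow> bool) \<Rightarrow> 'e \<Rightarrow> 'v" where
  "tail ends o' e = (if o' e then fst (ends e) else snd (ends e))"

definition head :: "('e \<Rightarrow> 'v \<times> 'v) \<Rightarrow> ('e \<Rightarrow> bool) \<Rightarrow> 'e \<Rightarrow> 'v" where
  "head ends o' e = (if o' e then snd (ends e) else fst (ends e))"

definition dir_cycle :: "'e set \<Rightarrow> ('e \<Rightarrow> 'v \<times> 'v) \<Rightarrow> ('e \<Rightarrow> bool) \<Rightarrow> 'e list \<Rightarrow> bool" where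
  "dir_cycle E ends o' cs \<longleftrightarrow> cs \<noteq> [] \<and> distinct cs \<and> set cs \<subseteq> E \<and>
     distinct (map (tail ends o') cs) \<and>
     (\<forall>i < length cs. head ends o' (cs ! i) = tail ends o' (cs ! ((i + 1) mod length cs)))"

definition totally_cyclic :: "'e set \<Rightarrow> ('e \<Rightarrow> 'v \<times> 'v) \<Rightarrow> ('e \<Rightarrow> bool) \<Rightarrow> bool" where
  "totally_cyclic E ends o' \<longleftrightarrow> (\<forall>e\<in>E. \<exists>cs. dir_cycle E ends o' cs \<and> e \<in> set cs)"

definition totally_cyclic_orientations :: "'e set \<Rightarrow> ('e \<Rightarrow> 'v \<times> 'v) \<Rightarrow> ('e \<Rightarrow> bool) set" where
  "totally_cyclic_orientations E ends =
     {o' \<in> E \<rightarrow>\<^sub>E (UNIV :: bool set). totally_cyclic E ends o'}"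

end

theory Submission
  imports Defs
begin

text \<open>Colour the vertices of G first: the new vertex w_e then has \<open>\<lambda>\<close> admissible colours,
  minus one if both ends of e got the same colour. Expanding the product over the edges by
  inclusion-exclusion gives \<open>P(H_G, \<lambda>) = \<Sum>(-1)^|A| \<lambda>^(|E| - |A| + c(A))\<close> over all \<open>A \<subseteq> E\<close>,
  so \<open>P(H_G, -1) = \<plusminus>\<Sum>(-1)^c(A)\<close>, while \<open>T_G(0, 2) = \<Sum>(-1)^(r(E) - r(A))\<close> is the same
  signed sum times \<open>(-1)^c(E)\<close>. Totally cyclic orientations satisfy the recursion
  \<open>\<tau>(G) = \<tau>(G - e) + \<tau>(G / e)\<close> for an edge e lying on a cycle, and \<open>\<tau>(G) = 0\<close> when e is a
  bridge; the signed sum obeys the same recursion.\<close>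

section \<open>Connected components\<close>

lemma rtrancl_insert_absorb: "(a, b) \<in> S\<^sup>* \<Longrightarrow> (insert (a, b) S)\<^sup>* = S\<^sup>*"
  by (auto simp: rtrancl_insert intro: rtrancl_trans)

lemma rtrancl_insert_both:
  "(x, y) \<in> (insert (u, v) (insert (v, u) R))\<^sup>* \<longleftrightarrow>
    (x, y) \<in> R\<^sup>* \<or> (x, u) \<in> R\<^sup>* \<and> (v, y) \<in> R\<^sup>* \<or> (x, v) \<in> R\<^sup>* \<and> (u, y) \<in> R\<^sup>*"
  by (simp add: rtrancl_insert) (meson rtrancl_trans)

lemma adj_empty [simp]: "adj ends {} = {}"
  unfolding adj_def by auto

lemma adj_union: "adj ends (A \<union> B) = adj ends A \<union> adj ends B"
  unfolding adj_def by auto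

lemma adj_insert:
  "adj ends (insert e A) =
     insert (fst (ends e), snd (ends e)) (insert (snd (ends e), fst (ends e)) (adj ends A))"
  unfolding adj_def by (cases "ends e") auto

lemma adj_mono: "A \<subseteq> B \<Longrightarrow> adj ends A \<subseteq> adj ends B"
  unfolding adj_def by auto

lemma rtrancl_adj_sym: "(x, y) \<in> (adj ends A)\<^sup>* \<Longrightarrow> (y, x) \<in> (adj ends A)\<^sup>*"
proof -
  have "sym (adj ends A)"
    unfolding adj_def by (auto intro: symI)
  then show "(x, y) \<in> (adj ends A)\<^sup>* \<Longrightarrow> (y, x) \<in> (adj ends A)\<^sup>*"
    using sym_rtrancl by (blast dest: symD)
qed

definition component :: "'v set \<Rightarrow> ('e \<Rightarrow> 'v \<times> 'v) \<Rightarrow> 'e set \<Rightarrow> 'v \<Rightarrow> 'v set" where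
  "component V ends A x = {y \<in> V. (x, y) \<in> (adj ends A)\<^sup>*}"

lemma mem_component_iff: "y \<in> component V ends A x \<longleftrightarrow> y \<in> V \<and> (x, y) \<in> (adj ends A)\<^sup>*"
  unfolding component_def by simp

lemma component_self: "x \<in> V \<Longrightarrow> x \<in> component V ends A x"
  by (simp add: mem_component_iff)

lemma component_eq:
  assumes "(x, y) \<in> (adj ends A)\<^sup>*"
  shows "component V ends A x = component V ends A y"
  using assms rtrancl_adj_sym[OF assms]
  unfolding component_def by (blast intro: rtrancl_trans)

lemma component_eq_if_mem: "y \<in> component V ends A x \<Longrightarrow> component V ends A y = component V ends A x"
  by (metis component_eq mem_component_iff)

lemma num_comps_eq_card_components: "num_comps V ends A = card (component V ends A ` V)"
proof -
  have "V // conn_rel V ends A = component V ends A ` V"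
    unfolding quotient_def conn_rel_def component_def by auto
  then show ?thesis
    unfolding num_comps_def by simp
qed

lemma num_comps_le_card: "finite V \<Longrightarrow> num_comps V ends A \<le> card V"
  unfolding num_comps_eq_card_components by (rule card_image_le)

lemma num_comps_antimono:
  assumes "finite V" and "A \<subseteq> B"
  shows "num_comps V ends B \<le> num_comps V ends A"
proof -
  let ?merge = "\<lambda>X. \<Union>x\<in>X. component V ends B x"
  have "component V ends B x = ?merge (component V ends A x)" if "x \<in> V" for x
  proof
    show "component V ends B x \<subseteq> ?merge (component V ends A x)"
      using that component_self by fastforce
    have "(adj ends A)\<^sup>* \<subseteq> (adj ends B)\<^sup>*"
      using assms(2) by (intro rtrancl_mono adj_mono)
    then show "?merge (component V ends A x) \<subseteq> component V ends B x"
      by (auto simp: mem_component_iff) (meson rtrancl_trans subsetD)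
  qed
  then have "component V ends B ` V = ?merge ` component V ends A ` V"
    by (simp add: image_image)
  then show ?thesis
    unfolding num_comps_eq_card_components using assms(1) by (simp add: card_image_le)
qed

lemma num_comps_insert_connected:
  assumes "(fst (ends e), snd (ends e)) \<in> (adj ends A)\<^sup>*"
  shows "num_comps V ends (insert e A) = num_comps V ends A"
proof -
  define u v where "u = fst (ends e)" and "v = snd (ends e)"
  have uv: "(u, v) \<in> (adj ends A)\<^sup>*" and vu: "(v, u) \<in> (adj ends A)\<^sup>*"
    using assms rtrancl_adj_sym[OF assms] unfolding u_def v_def by auto
  have "(insert (u, v) (insert (v, u) (adj ends A)))\<^sup>* = (adj ends A)\<^sup>*"
    using uv by (simp add: rtrancl_insert_absorb[OF vu] rtrancl_insert_absorb)
  then have "(adj ends (insert e A))\<^sup>* = (adj ends A)\<^sup>*"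
    unfolding adj_insert u_def v_def .
  then show ?thesis
    unfolding num_comps_def conn_rel_def by simp
qed

lemma component_insert:
  fixes ends :: "'e \<Rightarrow> 'v \<times> 'v" and A :: "'e set"
  assumes "x \<in> V"
  defines "K \<equiv> component V ends A"
  shows "component V ends (insert e A) x =
    (if x \<in> K (fst (ends e)) \<union> K (snd (ends e)) then K (fst (ends e)) \<union> K (snd (ends e)) else K x)"
proof -
  define u v where "u = fst (ends e)" and "v = snd (ends e)"
  let ?R = "adj ends A"
  have sym: "(a, b) \<in> ?R\<^sup>* \<longleftrightarrow> (b, a) \<in> ?R\<^sup>*" for a b
    using rtrancl_adj_sym by metis
  have same: "(x, y) \<in> ?R\<^sup>* \<longleftrightarrow> (a, y) \<in> ?R\<^sup>*" if "(a, x) \<in> ?R\<^sup>*" for a y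
    using that sym by (meson rtrancl_trans)
  have new_component: "component V ends (insert e A) x = {y \<in> V. (x, y) \<in> ?R\<^sup>* \<or>
      (x, u) \<in> ?R\<^sup>* \<and> (v, y) \<in> ?R\<^sup>* \<or> (x, v) \<in> ?R\<^sup>* \<and> (u, y) \<in> ?R\<^sup>*}"
    unfolding component_def adj_insert u_def v_def rtrancl_insert_both ..
  consider "(u, x) \<in> ?R\<^sup>*" | "(v, x) \<in> ?R\<^sup>*" | "(u, x) \<notin> ?R\<^sup>*" "(v, x) \<notin> ?R\<^sup>*"
    by blast
  then show ?thesis
  proof cases
    case 1
    then have "(x, u) \<in> ?R\<^sup>*"
      using sym by blast
    with 1 new_component show ?thesis
      using assms(1) same[OF 1] unfolding K_def component_def u_def v_def by auto
  next
    case 2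
    then have "(x, v) \<in> ?R\<^sup>*"
      using sym by blast
    with 2 new_component show ?thesis
      using assms(1) same[OF 2] unfolding K_def component_def u_def v_def by auto
  next
    case 3
    then have "(x, u) \<notin> ?R\<^sup>*" "(x, v) \<notin> ?R\<^sup>*"
      using sym by blast+
    with 3 new_component show ?thesis
      unfolding K_def component_def u_def v_def by auto
  qed
qed

lemma image_merge_two_classes:
  assumes "u \<in> V" and K_self: "\<And>x. x \<in> V \<Longrightarrow> x \<in> K x" and K_eq: "\<And>x y. x \<in> K y \<Longrightarrow> K x = K y"
    and merged: "\<And>x. x \<in> V \<Longrightarrow> K' x = (if x \<in> K u \<union> K v then K u \<union> K v else K x)"
  shows "K' ` V = insert (K u \<union> K v) (K ` V - {K u, K v})"
proof (intro equalityI subsetI)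
  fix Y assume "Y \<in> K' ` V"
  then obtain x where x: "x \<in> V" "Y = K' x"
    by blast
  show "Y \<in> insert (K u \<union> K v) (K ` V - {K u, K v})"
  proof (cases "x \<in> K u \<union> K v")
    case False
    then have "K x \<noteq> K u" "K x \<noteq> K v"
      using K_self[OF x(1)] by auto
    then show ?thesis
      using x merged False by auto
  qed (use x merged in simp)
next
  fix Y assume Y: "Y \<in> insert (K u \<union> K v) (K ` V - {K u, K v})"
  show "Y \<in> K' ` V"
  proof (cases "Y = K u \<union> K v")
    case True
    then have "Y = K' u"
      using merged[of u] assms(1) K_self by auto
    then show ?thesis
      using assms(1) by blast
  next
    case False
    then obtain x where x: "x \<in> V" "Y = K x" "K x \<noteq> K u" "K x \<noteq> K v"
      using Y by auto
    then have "Y = K' x"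
      using K_eq merged by (metis UnE)
    then show ?thesis
      using x by blast
  qed
qed

lemma card_image_merge_two_classes:
  assumes "finite V" "u \<in> V" "v \<in> V" "K u \<noteq> K v"
    and K_self: "\<And>x. x \<in> V \<Longrightarrow> x \<in> K x" and K_eq: "\<And>x y. x \<in> K y \<Longrightarrow> K x = K y"
    and merged: "\<And>x. x \<in> V \<Longrightarrow> K' x = (if x \<in> K u \<union> K v then K u \<union> K v else K x)"
  shows "card (K ` V) = Suc (card (K' ` V))"
proof -
  have "K' ` V = insert (K u \<union> K v) (K ` V - {K u, K v})"
    using assms(2) K_self K_eq merged by (rule image_merge_two_classes)
  moreover have "K u \<union> K v \<notin> K ` V"
  proof
    assume "K u \<union> K v \<in> K ` V"
    then obtain x where "K x = K u \<union> K v"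
      by auto
    then have "K u = K x" "K v = K x"
      using K_eq K_self assms(2,3) by (metis UnCI)+
    with assms(4) show False
      by simp
  qed
  moreover have "card {K u, K v} \<le> card (K ` V)"
    using assms(1-3) by (intro card_mono) auto
  ultimately show ?thesis
    using assms(1-4) by (simp add: card_Diff_subset)
qed

lemma num_comps_insert_bridge:
  assumes "finite V" and "fst (ends e) \<in> V" "snd (ends e) \<in> V"
    and bridge: "(fst (ends e), snd (ends e)) \<notin> (adj ends A)\<^sup>*"
  shows "num_comps V ends A = Suc (num_comps V ends (insert e A))"
proof -
  let ?K = "component V ends A"
  have "?K (fst (ends e)) \<noteq> ?K (snd (ends e))"
    using assms(2,3) bridge component_self by (metis mem_component_iff)
  then show ?thesis
    unfolding num_comps_eq_card_components using assms(1-3)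
    by (intro card_image_merge_two_classes[where u = "fst (ends e)" and v = "snd (ends e)"]
        component_self component_eq_if_mem component_insert)
qed

section \<open>Totally cyclic orientations and a signed sum over spanning subgraphs\<close>

definition signed_component_sum :: "'v set \<Rightarrow> ('e \<Rightarrow> 'v \<times> 'v) \<Rightarrow> 'e set \<Rightarrow> 'e set \<Rightarrow> int" where
  "signed_component_sum V ends C E = (\<Sum>A\<in>Pow E. (-1) ^ num_comps V ends (C \<union> A))"

lemma signed_component_sum_empty [simp]: "signed_component_sum V ends C {} = (-1) ^ num_comps V ends C"
  unfolding signed_component_sum_def by simp

lemma signed_component_sum_insert:
  assumes "finite E" and "e \<notin> E"
  shows "signed_component_sum V ends C (insert e E) =
    signed_component_sum V ends C E + signed_component_sum V ends (insert e C) E"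
proof -
  have "inj_on (insert e) (Pow E)"
    using assms(2) by (auto simp: inj_on_def)
  moreover have "Pow E \<inter> insert e ` Pow E = {}"
    using assms(2) by auto
  ultimately show ?thesis
    unfolding signed_component_sum_def Pow_insert using assms(1)
    by (simp add: sum.union_disjoint sum.reindex)
qed

lemma signed_component_sum_bridge:
  assumes "finite V" "finite E" "e \<in> E" "fst (ends e) \<in> V" "snd (ends e) \<in> V"
    and bridge: "(fst (ends e), snd (ends e)) \<notin> (adj ends (C \<union> (E - {e})))\<^sup>*"
  shows "signed_component_sum V ends C E = 0"
proof -
  have E: "E = insert e (E - {e})"
    using assms(3) by blast
  have "signed_component_sum V ends C E = (\<Sum>A\<in>Pow (E - {e}).
      (-1) ^ num_comps V ends (C \<union> A) + (-1) ^ num_comps V ends (insert e (C \<union> A)))"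
    using assms(2) by (subst E, subst signed_component_sum_insert) (simp_all add: signed_component_sum_def sum.distrib)
  also have "\<dots> = 0"
  proof (intro sum.neutral ballI)
    fix A assume "A \<in> Pow (E - {e})"
    then have "(adj ends (C \<union> A))\<^sup>* \<subseteq> (adj ends (C \<union> (E - {e})))\<^sup>*"
      by (intro rtrancl_mono adj_mono) blast
    with bridge have "(fst (ends e), snd (ends e)) \<notin> (adj ends (C \<union> A))\<^sup>*"
      by blast
    then have "num_comps V ends (C \<union> A) = Suc (num_comps V ends (insert e (C \<union> A)))"
      using assms by (intro num_comps_insert_bridge) auto
    then show "(-1) ^ num_comps V ends (C \<union> A) + (-1) ^ num_comps V ends (insert e (C \<union> A)) = (0::int)"
      by simp
  qed
  finally show ?thesis .
qed

definition arcs :: "('e \<Rightarrow> 'v \<times> 'v) \<Rightarrow> ('e \<Rightarrow> bool) \<Rightarrow> 'e set \<Rightarrow> ('v \<times> 'v) set" where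
  "arcs ends o' A = (\<lambda>f. (tail ends o' f, head ends o' f)) ` A"

text \<open>The edges in \<open>C\<close> are undirected and may be traversed both ways. Moving an edge from \<open>E\<close>
  to \<open>C\<close> stands in for contracting it: both make its ends mutually reachable.\<close>
definition mixed_totally_cyclic ::
    "('e \<Rightarrow> 'v \<times> 'v) \<Rightarrow> 'e set \<Rightarrow> 'e set \<Rightarrow> ('e \<Rightarrow> bool) \<Rightarrow> bool" where
  "mixed_totally_cyclic ends C E o' \<longleftrightarrow>
     (arcs ends o' E)\<inverse> \<subseteq> (adj ends C \<union> arcs ends o' E)\<^sup>*"

definition num_mixed_totally_cyclic :: "('e \<Rightarrow> 'v \<times> 'v) \<Rightarrow> 'e set \<Rightarrow> 'e set \<Rightarrow> nat" where
  "num_mixed_totally_cyclic ends C E =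
     card {o' \<in> E \<rightarrow>\<^sub>E (UNIV :: bool set). mixed_totally_cyclic ends C E o'}"

lemma adj_eq_arcs_un_converse: "adj ends A = arcs ends o' A \<union> (arcs ends o' A)\<inverse>"
  unfolding adj_def arcs_def tail_def head_def by (force split: if_splits)

lemma arcs_fun_upd_insert:
  assumes "e \<notin> A"
  shows "arcs ends (o'(e := b)) (insert e A) =
    insert (if b then (fst (ends e), snd (ends e)) else (snd (ends e), fst (ends e))) (arcs ends o' A)"
  using assms unfolding arcs_def tail_def head_def by (auto intro!: image_cong)

lemma rtrancl_one_way_if_closed_by_edge:
  fixes S Q :: "'a rel"
  assumes "Q\<inverse> \<subseteq> S" and "\<not> Q \<subseteq> S\<^sup>*" and "Q \<subseteq> (insert (u, v) (insert (v, u) S))\<^sup>*"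
  shows "(u, v) \<in> S\<^sup>* \<longleftrightarrow> (v, u) \<notin> S\<^sup>*"
proof
  assume "(u, v) \<in> S\<^sup>*"
  show "(v, u) \<notin> S\<^sup>*"
  proof
    assume "(v, u) \<in> S\<^sup>*"
    with \<open>(u, v) \<in> S\<^sup>*\<close> have "(insert (u, v) (insert (v, u) S))\<^sup>* = S\<^sup>*"
      by (simp add: rtrancl_insert_absorb)
    with assms(2,3) show False
      by simp
  qed
next
  assume "(v, u) \<notin> S\<^sup>*"
  from assms(2,3) obtain a b where ab: "(a, b) \<in> Q" "(a, b) \<notin> S\<^sup>*"
      "(a, b) \<in> (insert (u, v) (insert (v, u) S))\<^sup>*"
    by auto
  moreover have "(b, a) \<in> S"
    using assms(1) ab(1) by blast
  ultimately show "(u, v) \<in> S\<^sup>*"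
    using \<open>(v, u) \<notin> S\<^sup>*\<close> unfolding rtrancl_insert_both
    by (meson converse_rtrancl_into_rtrancl rtrancl_trans)
qed

text \<open>Here \<open>S\<close> holds the arcs and undirected edges other than \<open>uv\<close>, and \<open>Q\<close> the reversed arcs
  that must be closed up by paths. The left side counts the good orientations of \<open>uv\<close>, the right
  side the good configurations with \<open>uv\<close> deleted and with \<open>uv\<close> undirected.\<close>
lemma edge_orientation_count:
  fixes S Q :: "'a rel"
  assumes "Q\<inverse> \<subseteq> S"
    and connected: "Q \<subseteq> S\<^sup>* \<Longrightarrow> (u, v) \<in> S\<^sup>* \<and> (v, u) \<in> S\<^sup>*"
  shows "of_bool (insert (v, u) Q \<subseteq> (insert (u, v) S)\<^sup>*) +
         of_bool (insert (u, v) Q \<subseteq> (insert (v, u) S)\<^sup>*) =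
         of_bool (Q \<subseteq> S\<^sup>*) + (of_bool (Q \<subseteq> (insert (u, v) (insert (v, u) S))\<^sup>*) :: nat)"
proof -
  let ?Suv = "insert (u, v) S" and ?Svu = "insert (v, u) S"
  let ?Sboth = "insert (u, v) (insert (v, u) S)"
  have mono: "S\<^sup>* \<subseteq> ?Suv\<^sup>*" "S\<^sup>* \<subseteq> ?Svu\<^sup>*" "?Suv\<^sup>* \<subseteq> ?Sboth\<^sup>*" "?Svu\<^sup>* \<subseteq> ?Sboth\<^sup>*"
    by (rule rtrancl_mono, blast)+
  have reverse_arc: "(v, u) \<in> ?Suv\<^sup>* \<longleftrightarrow> (v, u) \<in> S\<^sup>*" "(u, v) \<in> ?Svu\<^sup>* \<longleftrightarrow> (u, v) \<in> S\<^sup>*"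
    by (auto simp: rtrancl_insert)
  consider "Q \<subseteq> S\<^sup>*" | "\<not> Q \<subseteq> S\<^sup>*" "Q \<subseteq> ?Sboth\<^sup>*" | "\<not> Q \<subseteq> ?Sboth\<^sup>*"
    by blast
  then show ?thesis
  proof cases
    case 1
    with connected mono show ?thesis
      by auto
  next
    case 2
    note one_way = rtrancl_one_way_if_closed_by_edge[OF assms(1) 2]
    show ?thesis
    proof (cases "(v, u) \<in> S\<^sup>*")
      case True
      have "?Sboth = insert (v, u) ?Suv"
        by blast
      then have "?Sboth\<^sup>* = ?Suv\<^sup>*"
        using True reverse_arc by (simp add: rtrancl_insert_absorb)
      with 2 True one_way reverse_arc show ?thesis
        by auto
    next
      case False
      then have "?Sboth\<^sup>* = ?Svu\<^sup>*"
        using one_way reverse_arc by (simp add: rtrancl_insert_absorb)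
      with 2 False one_way reverse_arc show ?thesis
        by auto
    qed
  next
    case 3
    with mono show ?thesis
      by auto
  qed
qed

lemma mixed_totally_cyclic_orient_edge:
  assumes "e \<notin> E" and "(fst (ends e), snd (ends e)) \<in> (adj ends (C \<union> E))\<^sup>*"
  shows "of_bool (mixed_totally_cyclic ends C (insert e E) (o'(e := True))) +
         of_bool (mixed_totally_cyclic ends C (insert e E) (o'(e := False))) =
         of_bool (mixed_totally_cyclic ends C E o') +
         (of_bool (mixed_totally_cyclic ends (insert e C) E o') :: nat)"
proof -
  obtain u v where ends_e: "ends e = (u, v)"
    by fastforce
  let ?S = "adj ends C \<union> arcs ends o' E"
  have "(u, v) \<in> ?S\<^sup>* \<and> (v, u) \<in> ?S\<^sup>*" if reversible: "(arcs ends o' E)\<inverse> \<subseteq> ?S\<^sup>*"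
  proof -
    have "adj ends (C \<union> E) \<subseteq> ?S \<union> (arcs ends o' E)\<inverse>"
      unfolding adj_union adj_eq_arcs_un_converse[of ends E o'] by blast
    also have "\<dots> \<subseteq> ?S\<^sup>*"
      using reversible by blast
    finally have "(adj ends (C \<union> E))\<^sup>* \<subseteq> ?S\<^sup>*"
      by (rule rtrancl_subset_rtrancl)
    moreover have "(u, v) \<in> (adj ends (C \<union> E))\<^sup>*" "(v, u) \<in> (adj ends (C \<union> E))\<^sup>*"
      using assms(2) rtrancl_adj_sym[OF assms(2)] unfolding ends_e by simp_all
    ultimately show ?thesis
      by blast
  qed
  moreover have "((arcs ends o' E)\<inverse>)\<inverse> \<subseteq> ?S"
    by auto
  moreover have
    "mixed_totally_cyclic ends C (insert e E) (o'(e := True)) \<longleftrightarrow>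
       insert (v, u) ((arcs ends o' E)\<inverse>) \<subseteq> (insert (u, v) ?S)\<^sup>*"
    "mixed_totally_cyclic ends C (insert e E) (o'(e := False)) \<longleftrightarrow>
       insert (u, v) ((arcs ends o' E)\<inverse>) \<subseteq> (insert (v, u) ?S)\<^sup>*"
    "mixed_totally_cyclic ends C E o' \<longleftrightarrow> (arcs ends o' E)\<inverse> \<subseteq> ?S\<^sup>*"
    "mixed_totally_cyclic ends (insert e C) E o' \<longleftrightarrow>
       (arcs ends o' E)\<inverse> \<subseteq> (insert (u, v) (insert (v, u) ?S))\<^sup>*"
    unfolding mixed_totally_cyclic_def arcs_fun_upd_insert[OF assms(1)] adj_insert ends_e
    by auto
  ultimately show ?thesis
    by (simp only:) (rule edge_orientation_count)
qed

lemma sum_PiE_insert: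
  assumes "x \<notin> S"
  shows "(\<Sum>g\<in>Pi\<^sub>E (insert x S) T. f g) = (\<Sum>y\<in>T x. \<Sum>g\<in>Pi\<^sub>E S T. f (g(x := y)))"
proof -
  have "(\<Sum>g\<in>Pi\<^sub>E (insert x S) T. f g) = (\<Sum>(y, g)\<in>T x \<times> Pi\<^sub>E S T. f (g(x := y)))"
    unfolding PiE_insert_eq sum.reindex[OF inj_combinator[OF assms]] by (simp add: comp_def case_prod_unfold)
  then show ?thesis
    by (simp add: sum.cartesian_product)
qed

lemma num_mixed_totally_cyclic_eq_sum:
  "finite E \<Longrightarrow> num_mixed_totally_cyclic ends C E =
     (\<Sum>o'\<in>E \<rightarrow>\<^sub>E UNIV. of_bool (mixed_totally_cyclic ends C E o'))"
  unfolding num_mixed_totally_cyclic_def by (simp add: finite_PiE Int_def)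

lemma num_mixed_totally_cyclic_insert:
  assumes "finite E" "e \<notin> E" and "(fst (ends e), snd (ends e)) \<in> (adj ends (C \<union> E))\<^sup>*"
  shows "num_mixed_totally_cyclic ends C (insert e E) =
    num_mixed_totally_cyclic ends C E + num_mixed_totally_cyclic ends (insert e C) E"
proof -
  have "num_mixed_totally_cyclic ends C (insert e E) = (\<Sum>b\<in>UNIV. \<Sum>o'\<in>E \<rightarrow>\<^sub>E UNIV.
      of_bool (mixed_totally_cyclic ends C (insert e E) (o'(e := b))))"
    using assms(1,2) by (simp add: num_mixed_totally_cyclic_eq_sum sum_PiE_insert)
  also have "\<dots> = (\<Sum>o'\<in>E \<rightarrow>\<^sub>E UNIV.
      of_bool (mixed_totally_cyclic ends C (insert e E) (o'(e := True))) +
      of_bool (mixed_totally_cyclic ends C (insert e E) (o'(e := False))))"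
    unfolding UNIV_bool by (simp add: sum.distrib add.commute)
  also have "\<dots> = (\<Sum>o'\<in>E \<rightarrow>\<^sub>E UNIV. of_bool (mixed_totally_cyclic ends C E o') +
      of_bool (mixed_totally_cyclic ends (insert e C) E o'))"
    using mixed_totally_cyclic_orient_edge[OF assms(2,3)] by simp
  finally show ?thesis
    using assms(1) by (simp add: num_mixed_totally_cyclic_eq_sum sum.distrib)
qed

lemma not_mixed_totally_cyclic_bridge:
  assumes "e \<in> E" and bridge: "(fst (ends e), snd (ends e)) \<notin> (adj ends (C \<union> (E - {e})))\<^sup>*"
  shows "\<not> mixed_totally_cyclic ends C E o'"
proof
  let ?S = "adj ends (C \<union> (E - {e}))"
  let ?t = "tail ends o' e" and ?h = "head ends o' e"
  assume "mixed_totally_cyclic ends C E o'"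
  then have "(?h, ?t) \<in> (adj ends C \<union> arcs ends o' E)\<^sup>*"
    using assms(1) unfolding mixed_totally_cyclic_def arcs_def by blast
  moreover have "adj ends C \<union> arcs ends o' E \<subseteq> insert (?t, ?h) ?S"
    using adj_eq_arcs_un_converse[of ends "E - {e}" o'] unfolding adj_union arcs_def by blast
  ultimately have "(?h, ?t) \<in> (insert (?t, ?h) ?S)\<^sup>*"
    using rtrancl_mono by blast
  then have "(?h, ?t) \<in> ?S\<^sup>*"
    by (simp add: rtrancl_insert)
  then show False
    using bridge unfolding head_def tail_def by (cases "o' e") (auto dest: rtrancl_adj_sym)
qed

lemma num_mixed_totally_cyclic_eq_signed_component_sum:
  assumes "finite V" "finite E" and "\<forall>f\<in>C \<union> E. fst (ends f) \<in> V \<and> snd (ends f) \<in> V"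
  shows "int (num_mixed_totally_cyclic ends C E) =
    (-1) ^ num_comps V ends (C \<union> E) * signed_component_sum V ends C E"
  using assms(2,3)
proof (induction E arbitrary: C rule: finite_induct)
  case empty
  have "num_mixed_totally_cyclic ends C {} = 1"
    unfolding num_mixed_totally_cyclic_def mixed_totally_cyclic_def arcs_def by simp
  then show ?case
    by (simp flip: power_add)
next
  case (insert e E)
  show ?case
  proof (cases "(fst (ends e), snd (ends e)) \<in> (adj ends (C \<union> E))\<^sup>*")
    case True
    have "num_comps V ends (C \<union> E) = num_comps V ends (C \<union> insert e E)"
      using num_comps_insert_connected[OF True] by simp
    then show ?thesis
      using insert True
      by (simp add: num_mixed_totally_cyclic_insert signed_component_sum_insert algebra_simps)
  next
    case False
    moreover have "insert e E - {e} = E"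
      using insert.hyps(2) by blast
    ultimately have "num_mixed_totally_cyclic ends C (insert e E) = 0"
      unfolding num_mixed_totally_cyclic_def
      using not_mixed_totally_cyclic_bridge[of e "insert e E" ends C] by simp
    moreover have "signed_component_sum V ends C (insert e E) = 0"
      using False insert assms(1) by (intro signed_component_sum_bridge) auto
    ultimately show ?thesis
      by simp
  qed
qed

section \<open>Directed cycles\<close>

fun arc_walk :: "'e set \<Rightarrow> ('e \<Rightarrow> 'v \<times> 'v) \<Rightarrow> ('e \<Rightarrow> bool) \<Rightarrow> 'v \<Rightarrow> 'e list \<Rightarrow> 'v \<Rightarrow> bool" where
  "arc_walk E ends o' a [] b \<longleftrightarrow> a = b"
| "arc_walk E ends o' a (f # fs) b \<longleftrightarrow>
     f \<in> E \<and> tail ends o' f = a \<and> arc_walk E ends o' (head ends o' f) fs b"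

lemma arc_walk_append:
  "arc_walk E ends o' a (xs @ ys) c \<longleftrightarrow> (\<exists>b. arc_walk E ends o' a xs b \<and> arc_walk E ends o' b ys c)"
  by (induction xs arbitrary: a) auto

lemma arc_walk_subset: "arc_walk E ends o' a fs b \<Longrightarrow> set fs \<subseteq> E"
  by (induction fs arbitrary: a) auto

lemma arc_walk_head_nth:
  "arc_walk E ends o' a fs b \<Longrightarrow> Suc i < length fs \<Longrightarrow>
     head ends o' (fs ! i) = tail ends o' (fs ! Suc i)"
proof (induction fs arbitrary: a i)
  case (Cons f fs)
  then show ?case
    by (cases i; cases fs) auto
qed simp

lemma arc_walk_head_last: "arc_walk E ends o' a fs b \<Longrightarrow> fs \<noteq> [] \<Longrightarrow> head ends o' (last fs) = b"
  by (induction fs arbitrary: a) auto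

lemma arc_walk_if_rtrancl_arcs:
  assumes "(a, b) \<in> (arcs ends o' E)\<^sup>*"
  shows "\<exists>fs. arc_walk E ends o' a fs b"
  using assms
proof (induction rule: rtrancl_induct)
  case base
  have "arc_walk E ends o' a [] a"
    by simp
  then show ?case ..
next
  case (step b c)
  then obtain fs f where "arc_walk E ends o' a fs b" "f \<in> E" "tail ends o' f = b" "head ends o' f = c"
    unfolding arcs_def by auto
  then have "arc_walk E ends o' a (fs @ [f]) c"
    by (auto simp: arc_walk_append)
  then show ?case ..
qed

lemma arc_walk_split_nth:
  assumes "arc_walk E ends o' a fs b" and "i < length fs"
  shows "arc_walk E ends o' a (take i fs) (tail ends o' (fs ! i))"
    and "arc_walk E ends o' (tail ends o' (fs ! i)) (drop i fs) b"
proof -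
  obtain x where x: "arc_walk E ends o' a (take i fs) x" "arc_walk E ends o' x (drop i fs) b"
    using assms(1) arc_walk_append[of E ends o' a "take i fs" "drop i fs" b] by auto
  moreover have "drop i fs = fs ! i # drop (Suc i) fs"
    using assms(2) by (simp add: Cons_nth_drop_Suc)
  ultimately show "arc_walk E ends o' a (take i fs) (tail ends o' (fs ! i))"
    and "arc_walk E ends o' (tail ends o' (fs ! i)) (drop i fs) b"
    by auto
qed

lemma arc_walk_imp_path:
  "arc_walk E ends o' a fs b \<Longrightarrow>
     \<exists>ps. arc_walk E ends o' a ps b \<and> distinct (map (tail ends o') ps) \<and> b \<notin> tail ends o' ` set ps"
proof (induction "length fs" arbitrary: fs rule: less_induct)
  case less
  show ?case
  proof (cases "b \<in> tail ends o' ` set fs")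
    case True
    then obtain i where i: "i < length fs" "tail ends o' (fs ! i) = b"
      by (auto simp: in_set_conv_nth)
    then have "arc_walk E ends o' a (take i fs) b"
      using arc_walk_split_nth(1)[OF less.prems i(1)] by simp
    moreover have "length (take i fs) < length fs"
      using i by simp
    ultimately show ?thesis
      using less.hyps by blast
  next
    case end_new: False
    show ?thesis
    proof (cases "distinct (map (tail ends o') fs)")
      case True
      then show ?thesis
        using end_new less.prems by blast
    next
      case False
      then obtain i j where ij: "i < j" "j < length fs" "tail ends o' (fs ! i) = tail ends o' (fs ! j)"
        by (auto simp: distinct_conv_nth) (metis linorder_neqE_nat)
      have "arc_walk E ends o' a (take i fs) (tail ends o' (fs ! j))"
        using arc_walk_split_nth(1)[OF less.prems, of i] ij by simp
      moreover have "arc_walk E ends o' (tail ends o' (fs ! j)) (drop j fs) b"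
        using arc_walk_split_nth(2)[OF less.prems] ij by simp
      ultimately have "arc_walk E ends o' a (take i fs @ drop j fs) b"
        using arc_walk_append by metis
      moreover have "length (take i fs @ drop j fs) < length fs"
        using ij by simp
      ultimately show ?thesis
        using less.hyps by blast
    qed
  qed
qed

lemma dir_cycle_if_closed_arc_walk:
  assumes walk: "arc_walk E ends o' a cs a" and "cs \<noteq> []" and "distinct (map (tail ends o') cs)"
  shows "dir_cycle E ends o' cs"
  unfolding dir_cycle_def
proof (intro conjI allI impI)
  show "distinct cs"
    using assms(3) by (simp add: distinct_map)
  show "set cs \<subseteq> E"
    using walk by (rule arc_walk_subset)
  fix i assume i: "i < length cs"
  show "head ends o' (cs ! i) = tail ends o' (cs ! ((i + 1) mod length cs))"
  proof (cases "Suc i < length cs")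
    case True
    then show ?thesis
      using arc_walk_head_nth[OF walk] by simp
  next
    case False
    then have "i + 1 = length cs"
      using i by simp
    moreover from this have "cs ! i = last cs"
      by (cases cs rule: rev_cases) (auto simp: nth_append)
    moreover have "tail ends o' (cs ! 0) = a"
      using walk \<open>cs \<noteq> []\<close> by (cases cs) auto
    ultimately show ?thesis
      using arc_walk_head_last[OF walk \<open>cs \<noteq> []\<close>] by simp
  qed
qed (use assms in auto)

lemma dir_cycle_through_arc:
  assumes "e \<in> E" and "(head ends o' e, tail ends o' e) \<in> (arcs ends o' E)\<^sup>*"
  shows "\<exists>cs. dir_cycle E ends o' cs \<and> e \<in> set cs"
proof -
  obtain ps where ps: "arc_walk E ends o' (head ends o' e) ps (tail ends o' e)"
      "distinct (map (tail ends o') ps)" "tail ends o' e \<notin> tail ends o' ` set ps"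
    using arc_walk_if_rtrancl_arcs[OF assms(2)] arc_walk_imp_path by metis
  then have "dir_cycle E ends o' (e # ps)"
    using assms(1) by (intro dir_cycle_if_closed_arc_walk[where a = "tail ends o' e"]) auto
  then show ?thesis
    by auto
qed

lemma rtrancl_arcs_if_dir_cycle:
  assumes "dir_cycle E ends o' cs" and "e \<in> set cs"
  shows "(head ends o' e, tail ends o' e) \<in> (arcs ends o' E)\<^sup>*"
proof -
  define n where "n = length cs"
  define T where "T k = tail ends o' (cs ! k)" for k
  have n: "n > 0" and next_tail: "\<And>i. i < n \<Longrightarrow> head ends o' (cs ! i) = T ((i + 1) mod n)"
    and in_E: "\<And>i. i < n \<Longrightarrow> cs ! i \<in> E"
    using assms(1) unfolding dir_cycle_def n_def T_def by auto
  have along: "(T k, T ((k + j) mod n)) \<in> (arcs ends o' E)\<^sup>*" if "k < n" for k j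
  proof (induction j)
    case 0
    show ?case
      using that by simp
  next
    case (Suc j)
    define m where "m = (k + j) mod n"
    have "m < n"
      using n unfolding m_def by simp
    then have "(T m, T ((k + Suc j) mod n)) \<in> arcs ends o' E"
      using next_tail in_E unfolding arcs_def T_def m_def by (force simp: mod_Suc_eq)
    with Suc.IH show ?case
      unfolding m_def by (rule rtrancl_into_rtrancl)
  qed
  obtain i where i: "i < n" "e = cs ! i"
    using assms(2) unfolding n_def by (auto simp: in_set_conv_nth)
  have "((i + 1) mod n + (n - 1)) mod n = (i + 1 + (n - 1)) mod n"
    by (simp add: mod_add_left_eq)
  also have "\<dots> = i"
    using i n by (simp add: add.commute)
  finally have "(T ((i + 1) mod n), T i) \<in> (arcs ends o' E)\<^sup>*"
    using along[of "(i + 1) mod n" "n - 1"] n by simp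
  then show ?thesis
    using next_tail[OF i(1)] i unfolding T_def by simp
qed

lemma totally_cyclic_iff_mixed_totally_cyclic:
  "totally_cyclic E ends o' \<longleftrightarrow> mixed_totally_cyclic ends {} E o'"
proof -
  have "totally_cyclic E ends o' \<longleftrightarrow> (\<forall>e\<in>E. (head ends o' e, tail ends o' e) \<in> (arcs ends o' E)\<^sup>*)"
    unfolding totally_cyclic_def using dir_cycle_through_arc rtrancl_arcs_if_dir_cycle by metis
  then show ?thesis
    unfolding mixed_totally_cyclic_def arcs_def by auto
qed

lemma card_totally_cyclic_orientations:
  "card (totally_cyclic_orientations E ends) = num_mixed_totally_cyclic ends {} E"
  unfolding totally_cyclic_orientations_def num_mixed_totally_cyclic_def
    totally_cyclic_iff_mixed_totally_cyclic ..

section \<open>Weak colourings of the hypergraph\<close>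

lemma constant_on_rtrancl_adj:
  assumes "\<forall>e\<in>X. \<psi> (fst (ends e)) = \<psi> (snd (ends e))" and "(x, y) \<in> (adj ends X)\<^sup>*"
  shows "\<psi> x = \<psi> y"
  using assms(2)
proof (induction rule: rtrancl_induct)
  case (step y z)
  then obtain e where "e \<in> X" "ends e = (y, z) \<or> ends e = (z, y)"
    unfolding adj_def by auto
  with assms(1) step.IH show ?case
    by (metis fst_conv snd_conv)
qed simp

lemma colourings_constant_on_edges_eq_image:
  assumes "\<forall>e\<in>X. fst (ends e) \<in> V \<and> snd (ends e) \<in> V"
  shows "{\<psi> \<in> V \<rightarrow>\<^sub>E B. \<forall>e\<in>X. \<psi> (fst (ends e)) = \<psi> (snd (ends e))} =
    (\<lambda>g. restrict (g \<circ> component V ends X) V) ` (component V ends X ` V \<rightarrow>\<^sub>E B)"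
    (is "?constant = ?lift ` ?on_components")
proof (intro equalityI subsetI)
  let ?K = "component V ends X"
  fix \<psi> assume \<psi>: "\<psi> \<in> ?constant"
  define g where "g = (\<lambda>Y\<in>?K ` V. \<psi> (SOME y. y \<in> Y))"
  have "g (?K x) = \<psi> x" if "x \<in> V" for x
  proof -
    have "(SOME y. y \<in> ?K x) \<in> ?K x"
      using component_self[OF that] by (rule someI)
    then show ?thesis
      using \<psi> that constant_on_rtrancl_adj[of X \<psi> ends x]
      unfolding g_def by (auto simp: mem_component_iff)
  qed
  then have "\<psi> = ?lift g" and "g \<in> ?on_components"
    using \<psi> unfolding g_def by (auto simp: PiE_def extensional_def Pi_def)
  then show "\<psi> \<in> ?lift ` ?on_components"
    by blast
next
  fix \<psi> assume "\<psi> \<in> ?lift ` ?on_components"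
  moreover have "component V ends X (fst (ends e)) = component V ends X (snd (ends e))"
    if "e \<in> X" for e
    using that by (intro component_eq) (auto simp: adj_def intro: exI[of _ e])
  ultimately show "\<psi> \<in> ?constant"
    using assms by auto
qed

lemma card_colourings_constant_on_edges:
  assumes "finite V" and "\<forall>e\<in>X. fst (ends e) \<in> V \<and> snd (ends e) \<in> V"
  shows "card {\<psi> \<in> V \<rightarrow>\<^sub>E B. \<forall>e\<in>X. \<psi> (fst (ends e)) = \<psi> (snd (ends e))} =
    card B ^ num_comps V ends X"
proof -
  let ?K = "component V ends X"
  have "inj_on (\<lambda>g. restrict (g \<circ> ?K) V) (?K ` V \<rightarrow>\<^sub>E B)"
  proof (rule inj_onI)
    fix g h assume gh: "g \<in> ?K ` V \<rightarrow>\<^sub>E B" "h \<in> ?K ` V \<rightarrow>\<^sub>E B"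
      and eq: "restrict (g \<circ> ?K) V = restrict (h \<circ> ?K) V"
    have "g (?K x) = h (?K x)" if "x \<in> V" for x
      using fun_cong[OF eq, of x] that by simp
    with gh show "g = h"
      by (intro PiE_ext) auto
  qed
  then show ?thesis
    unfolding colourings_constant_on_edges_eq_image[OF assms(2)] using assms(1)
    by (simp add: card_image card_PiE num_comps_eq_card_components)
qed

lemma weak_colourings_hyp_of:
  "weak_colourings (hyp_of V E ends) k =
     (\<lambda>(\<psi>, \<omega>). case_sum \<psi> \<omega>) ` Sigma (V \<rightarrow>\<^sub>E {1..k})
       (\<lambda>\<psi>. \<Pi>\<^sub>E e\<in>E. {c \<in> {1..k}. \<not> (\<psi> (fst (ends e)) = c \<and> \<psi> (snd (ends e)) = c)})"
    (is "_ = ?join ` ?pairs")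
proof (intro equalityI subsetI)
  fix \<phi> assume \<phi>: "\<phi> \<in> weak_colourings (hyp_of V E ends) k"
  have "(\<lambda>x. \<phi> (Inl x), \<lambda>e. \<phi> (Inr e)) \<in> ?pairs"
    using \<phi> unfolding weak_colourings_def hyp_of_def hg_verts_def hg_edges_def
    by (auto simp: PiE_def Pi_def extensional_def card_insert_if)
  moreover have "\<phi> = ?join (\<lambda>x. \<phi> (Inl x), \<lambda>e. \<phi> (Inr e))"
    by (simp add: surjective_sum)
  ultimately show "\<phi> \<in> ?join ` ?pairs"
    by blast
next
  fix \<phi> assume "\<phi> \<in> ?join ` ?pairs"
  then show "\<phi> \<in> weak_colourings (hyp_of V E ends) k"
    unfolding weak_colourings_def hyp_of_def hg_verts_def hg_edges_def
    by (auto simp: PiE_def Pi_def extensional_def card_insert_if inj_image_mem_iff split: sum.split)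
qed

lemma card_avoiding_common_colour:
  assumes "finite B" and "a \<in> B"
  shows "int (card {c \<in> B. \<not> (a = c \<and> b = c)}) = int (card B) - of_bool (a = b)"
proof (cases "a = b")
  case True
  then have "{c \<in> B. \<not> (a = c \<and> b = c)} = B - {a}"
    by auto
  moreover have "card B > 0"
    using assms by (auto simp: card_gt_0_iff)
  ultimately show ?thesis
    using True assms by (simp add: of_nat_diff)
next
  case False
  then have "{c \<in> B. \<not> (a = c \<and> b = c)} = B"
    by auto
  with False show ?thesis
    by simp
qed

lemma card_weak_colourings_hyp_of_prod:
  assumes "finite V" "finite E" and ends_V: "\<forall>e\<in>E. fst (ends e) \<in> V \<and> snd (ends e) \<in> V"
  shows "int (card (weak_colourings (hyp_of V E ends) k)) =
    (\<Sum>\<psi>\<in>V \<rightarrow>\<^sub>E {1..k}. \<Prod>e\<in>E. int k - of_bool (\<psi> (fst (ends e)) = \<psi> (snd (ends e))))"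
proof -
  have join: "inj (\<lambda>(\<psi>, \<omega>). case_sum \<psi> \<omega>)"
    by (rule injI) (auto dest: case_sum_inject)
  have "card (weak_colourings (hyp_of V E ends) k) = (\<Sum>\<psi>\<in>V \<rightarrow>\<^sub>E {1..k}. \<Prod>e\<in>E.
      card {c \<in> {1..k}. \<not> (\<psi> (fst (ends e)) = c \<and> \<psi> (snd (ends e)) = c)})"
    unfolding weak_colourings_hyp_of card_image[OF inj_on_subset[OF join subset_UNIV]]
    using assms(1,2) by (simp add: card_SigmaI finite_PiE card_PiE)
  moreover have "int (card {c \<in> {1..k}. \<not> (\<psi> (fst (ends e)) = c \<and> \<psi> (snd (ends e)) = c)}) =
      int k - of_bool (\<psi> (fst (ends e)) = \<psi> (snd (ends e)))"
    if "\<psi> \<in> V \<rightarrow>\<^sub>E {1..k}" "e \<in> E" for \<psi> e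
  proof -
    have "\<psi> (fst (ends e)) \<in> {1..k}"
      using that ends_V by auto
    from card_avoiding_common_colour[OF _ this, of "\<psi> (snd (ends e))"] show ?thesis
      by simp
  qed
  ultimately show ?thesis
    by (simp add: of_nat_prod)
qed

lemma prod_of_bool:
  "finite A \<Longrightarrow> (\<Prod>x\<in>A. of_bool (P x) :: 'a::comm_semiring_1) = of_bool (\<forall>x\<in>A. P x)"
  by (induction A rule: finite_induct) auto

lemma prod_diff_of_bool:
  fixes a :: "'a::comm_ring_1"
  assumes "finite E"
  shows "(\<Prod>e\<in>E. a - of_bool (P e)) =
    (\<Sum>X\<in>Pow E. (-1) ^ card X * of_bool (\<forall>e\<in>X. P e) * a ^ (card E - card X))"
proof -
  have "(\<Prod>e\<in>E. a - of_bool (P e)) = (\<Prod>e\<in>E. - of_bool (P e) + a)"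
    by simp
  also have "\<dots> = (\<Sum>X\<in>Pow E. (\<Prod>e\<in>X. - of_bool (P e)) * (\<Prod>e\<in>E - X. a))"
    by (rule prod_add[OF assms])
  also have "\<dots> = (\<Sum>X\<in>Pow E. (-1) ^ card X * of_bool (\<forall>e\<in>X. P e) * a ^ (card E - card X))"
    using assms by (intro sum.cong) (auto simp: prod_uminus prod_of_bool card_Diff_subset finite_subset)
  finally show ?thesis .
qed

lemma card_weak_colourings_hyp_of:
  assumes "finite V" "finite E" and ends_V: "\<forall>e\<in>E. fst (ends e) \<in> V \<and> snd (ends e) \<in> V"
  shows "int (card (weak_colourings (hyp_of V E ends) k)) =
    (\<Sum>X\<in>Pow E. (-1) ^ card X * int k ^ (card E - card X + num_comps V ends X))"
proof -
  let ?\<Psi> = "V \<rightarrow>\<^sub>E {1..k}"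
  let ?mono = "\<lambda>\<psi> e. \<psi> (fst (ends e)) = \<psi> (snd (ends e))"
  have "int (card (weak_colourings (hyp_of V E ends) k)) =
      (\<Sum>\<psi>\<in>?\<Psi>. \<Sum>X\<in>Pow E. (-1) ^ card X * of_bool (\<forall>e\<in>X. ?mono \<psi> e) * int k ^ (card E - card X))"
    using assms by (simp add: card_weak_colourings_hyp_of_prod prod_diff_of_bool)
  also have "\<dots> = (\<Sum>X\<in>Pow E. (-1) ^ card X * int (card {\<psi> \<in> ?\<Psi>. \<forall>e\<in>X. ?mono \<psi> e}) *
      int k ^ (card E - card X))"
    using assms(1)
    by (subst sum.swap) (simp add: sum_distrib_left[symmetric] finite_PiE Int_def mult.assoc)
  also have "\<dots> = (\<Sum>X\<in>Pow E. (-1) ^ card X * int k ^ (card E - card X + num_comps V ends X))"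
  proof (intro sum.cong refl)
    fix X assume "X \<in> Pow E"
    then have "card {\<psi> \<in> ?\<Psi>. \<forall>e\<in>X. ?mono \<psi> e} = k ^ num_comps V ends X"
      using assms(1) ends_V card_colourings_constant_on_edges[of V X ends "{1..k}"] by auto
    then show "(-1) ^ card X * int (card {\<psi> \<in> ?\<Psi>. \<forall>e\<in>X. ?mono \<psi> e}) * int k ^ (card E - card X) =
        (-1) ^ card X * int k ^ (card E - card X + num_comps V ends X)"
      by (simp add: power_add mult_ac)
  qed
  finally show ?thesis .
qed

lemma poly_eq_if_agree_on_infinite:
  fixes p q :: "'a::idom poly"
  assumes "infinite S" and "\<And>x. x \<in> S \<Longrightarrow> poly p x = poly q x"
  shows "p = q"
proof (rule ccontr)
  assume "p \<noteq> q"
  then have "finite {x. poly (p - q) x = 0}"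
    by (intro poly_roots_finite) simp
  moreover have "S \<subseteq> {x. poly (p - q) x = 0}"
    using assms(2) by auto
  ultimately show False
    using assms(1) finite_subset by blast
qed

lemma poly_hg_chrom_poly_hyp_of:
  assumes "multigraph V E ends"
  shows "poly (hg_chrom_poly (hyp_of V E ends)) x =
    (\<Sum>X\<in>Pow E. (-1) ^ card X * x ^ (card E - card X + num_comps V ends X))"
proof -
  define p :: "int poly" where
    "p = (\<Sum>X\<in>Pow E. monom ((-1) ^ card X) (card E - card X + num_comps V ends X))"
  have poly_p: "poly p y = (\<Sum>X\<in>Pow E. (-1) ^ card X * y ^ (card E - card X + num_comps V ends X))" for y
    unfolding p_def by (simp add: poly_sum poly_monom)
  let ?counts = "\<lambda>q. \<forall>k::nat. k \<ge> 1 \<longrightarrow> poly q (int k) = int (card (weak_colourings (hyp_of V E ends) k))"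
  have "?counts p"
    using assms unfolding multigraph_def poly_p by (simp add: card_weak_colourings_hyp_of)
  moreover have "q = p" if "?counts q" for q
  proof (rule poly_eq_if_agree_on_infinite)
    show "infinite (int ` {1..})"
      by (simp add: infinite_Ici finite_image_iff)
    show "poly q y = poly p y" if "y \<in> int ` {1..}" for y
      using that \<open>?counts p\<close> \<open>?counts q\<close> by auto
  qed
  ultimately have "hg_chrom_poly (hyp_of V E ends) = p"
    unfolding hg_chrom_poly_def by (rule the_equality)
  then show ?thesis
    by (simp add: poly_p)
qed

section \<open>Evaluation at \<open>-1\<close>\<close>

lemma poly_hg_chrom_poly_hyp_of_neg_one:
  assumes "multigraph V E ends"
  shows "poly (hg_chrom_poly (hyp_of V E ends)) (-1) = (-1) ^ card E * signed_component_sum V ends {} E"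
proof -
  have "(-1) ^ card X * (-1::int) ^ (card E - card X + num_comps V ends X) =
      (-1) ^ card E * (-1) ^ num_comps V ends X" if "X \<in> Pow E" for X
  proof -
    have "card X \<le> card E"
      using that assms unfolding multigraph_def by (auto intro: card_mono)
    then show ?thesis
      by (simp flip: power_add)
  qed
  then show ?thesis
    unfolding poly_hg_chrom_poly_hyp_of[OF assms] signed_component_sum_def sum_distrib_left
    by (auto intro: sum.cong)
qed

lemma tutte_0_2:
  assumes "finite V"
  shows "tutte V E ends 0 2 = (-1) ^ num_comps V ends E * signed_component_sum V ends {} E"
proof -
  have "(-1::int) ^ (rank V ends E - rank V ends A) = (-1) ^ num_comps V ends E * (-1) ^ num_comps V ends A"
    if "A \<in> Pow E" for A
  proof -
    have "num_comps V ends E \<le> num_comps V ends A" "num_comps V ends A \<le> card V"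
      using that assms by (auto intro: num_comps_antimono num_comps_le_card)
    then have "rank V ends E - rank V ends A = num_comps V ends A - num_comps V ends E"
      unfolding rank_def by simp
    with \<open>num_comps V ends E \<le> num_comps V ends A\<close> show ?thesis
      by (simp flip: neg_one_power_add_eq_neg_one_power_diff add: power_add)
  qed
  then show ?thesis
    unfolding tutte_def signed_component_sum_def sum_distrib_left by (auto intro: sum.cong)
qed

theorem corollary2:
  fixes V :: "'v set" and E :: "'e set" and ends :: "'e \<Rightarrow> 'v \<times> 'v"
  assumes "multigraph V E ends"
  shows "\<bar>poly (hg_chrom_poly (hyp_of V E ends)) (-1)\<bar> = tutte V E ends 0 2
       \<and> tutte V E ends 0 2 = int (card (totally_cyclic_orientations E ends))"
proof -
  let ?S = "signed_component_sum V ends {} E" and ?c = "num_comps V ends E"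
  have "finite V" "finite E" "\<forall>e\<in>E. fst (ends e) \<in> V \<and> snd (ends e) \<in> V"
    using assms unfolding multigraph_def by auto
  then have "int (card (totally_cyclic_orientations E ends)) = (-1) ^ ?c * ?S"
    using num_mixed_totally_cyclic_eq_signed_component_sum[of V E "{}" ends]
    by (simp add: card_totally_cyclic_orientations)
  moreover have "\<bar>(-1) ^ card E * ?S\<bar> = \<bar>(-1) ^ ?c * ?S\<bar>"
    by (simp add: abs_mult)
  ultimately show ?thesis
    using poly_hg_chrom_poly_hyp_of_neg_one[OF assms] tutte_0_2[OF \<open>finite V\<close>, of E ends] by simp
qed

end
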